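(* Let $N\ge 2$, $d\ge1$, let $f:\mathbb{Z}_N^d\to\mathbb{C}$ have support $E=\mathrm{supp}(f)$, and suppose the Fourier coefficients $\hat f(m)$ for $m$ in a set $S\subseteq\mathbb{Z}_N^d$ are unobserved. Suppose there are constants $K\ge 0$ and $2\le\alpha\le 3$ such that every subset $T\subseteq\mathbb{Z}_N^d$ with $|T|\le 2|E|$ satisfies $\Lambda_2(T)\le K|T|^\alpha$. If \[ |E|^3\left(\Lambda_2(S)-|S|(|S|-1)\left[1-\sqrt{\frac{K}{(2|E|)^{3-\alpha}}}\sqrt{\frac{N^d}{2|E||S|}}\right]-|S|^2\left(1-\frac{N^d}{2|E||S|}\right)\right)<\frac{N^{3d}}{8}, \] then $f$ can be uniquely recovered, i.e. every function $g:\mathbb{Z}_N^d\to\mathbb{C}$ with $|\mathrm{supp}(g)|=|E|$ and $\hat g(m)=\hat f(m)$ for all $m\notin S$ satisfies $g=f$.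
   Context: $\mathbb{Z}_N=\mathbb{Z}/N\mathbb{Z}$. The discrete Fourier transform of $f:\mathbb{Z}_N^d\to\mathbb{C}$ is $\hat f(m)=N^{-d/2}\sum_{x\in\mathbb{Z}_N^d}f(x)e^{-2\pi i\, m\cdot x/N}$. The support of a function is the set of points where it is nonzero. For $A\subseteq\mathbb{Z}_N^d$, the additive energy is $\Lambda_2(A)=\#\{(x_1,x_2,x_3,x_4)\in A^4: x_1+x_2=x_3+x_4\}$. *)

theory Defs
  imports "HOL-Analysis.Analysis"
begin

definition ZNd :: "nat \<Rightarrow> nat \<Rightarrow> (nat \<Rightarrow> int) set" where
  "ZNd N d = {x. (\<forall>i<d. 0 \<le> x i \<and> x i < int N) \<and> (\<forall>i\<ge>d. x i = 0)}"

definition zadd :: "nat \<Rightarrow> nat \<Rightarrow> (nat \<Rightarrow> int) \<Rightarrow> (nat \<Rightarrow> int) \<Rightarrow> (nat \<Rightarrow> int)" where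
  "zadd N d x y = (\<lambda>i. if i < d then (x i + y i) mod int N else 0)"

definition dft :: "nat \<Rightarrow> nat \<Rightarrow> ((nat \<Rightarrow> int) \<Rightarrow> complex) \<Rightarrow> (nat \<Rightarrow> int) \<Rightarrow> complex" where
  "dft N d f m = complex_of_real (real N powr (- real d / 2)) *
     (\<Sum>x\<in>ZNd N d. f x * exp (- 2 * pi * \<i> * of_int (\<Sum>i<d. m i * x i) / of_nat N))"

definition supp :: "nat \<Rightarrow> nat \<Rightarrow> ((nat \<Rightarrow> int) \<Rightarrow> complex) \<Rightarrow> (nat \<Rightarrow> int) set" where
  "supp N d f = {x \<in> ZNd N d. f x \<noteq> 0}"

definition energy :: "nat \<Rightarrow> nat \<Rightarrow> (nat \<Rightarrow> int) set \<Rightarrow> nat" where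
  "energy N d A = card {(x1, x2, x3, x4). x1 \<in> A \<and> x2 \<in> A \<and> x3 \<in> A \<and> x4 \<in> A \<and>
      zadd N d x1 x2 = zadd N d x3 x4}"

end

theory Submission
  imports Defs
begin

(* If g also fits the data, h = g - f satisfies |supp h| <= 2|E| and its Fourier transform
   vanishes off S; suppose h <> 0 and let P = sum |h|^2 = sum |h^|^2.
   The fourth moment sum |h|^4 is at least P^2 / |supp h| by Cauchy-Schwarz and, by Fourier
   inversion over S, at most N^-d times the additive energy of S weighted by |h^|. In that
   weighted energy the trivial quadruples {x3, x4} = {x1, x2} contribute about 2 P^2, every
   other one at most (|supp h| P / N^d)^2. Dually, sum_S |h^|^4 is at least P^2 / |S| and at
   most Lambda_2(supp h) (|S| P / N^d)^2 / N^d <= K (2|E|)^alpha (|S| P / N^d)^2 / N^d.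
   Together with the uncertainty principle |supp h| |S| >= N^d these inequalities force
   N^(3d) / 8 <= |E|^3 (...), contradicting the hypothesis. *)

section \<open>Characters of Z_N^d\<close>

definition unit_root :: "nat \<Rightarrow> int \<Rightarrow> complex" where
  "unit_root N k = exp (2 * pi * \<i> * of_int k / of_nat N)"

definition character :: "nat \<Rightarrow> nat \<Rightarrow> (nat \<Rightarrow> int) \<Rightarrow> (nat \<Rightarrow> int) \<Rightarrow> complex" where
  "character N d m x = unit_root N (\<Sum>i<d. m i * x i)"

lemma unit_root_add: "unit_root N (a + b) = unit_root N a * unit_root N b"
  unfolding unit_root_def by (simp add: exp_add[symmetric] distrib_left add_divide_distrib)

lemma unit_root_0 [simp]: "unit_root N 0 = 1"
  by (simp add: unit_root_def)

lemma unit_root_sum: "unit_root N (\<Sum>i\<in>A. f i) = (\<Prod>i\<in>A. unit_root N (f i))"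
  by (induction A rule: infinite_finite_induct) (simp_all add: unit_root_add)

lemma unit_root_eq_1_iff:
  assumes "N > 0"
  shows "unit_root N k = 1 \<longleftrightarrow> int N dvd k"
proof -
  have "unit_root N k = 1 \<longleftrightarrow> (\<exists>j::int. real_of_int k = real_of_int (j * int N))"
    using assms by (simp add: unit_root_def exp_eq_1 field_simps)
  also have "\<dots> \<longleftrightarrow> int N dvd k"
    by (metis dvd_def mult.commute of_int_eq_iff)
  finally show ?thesis .
qed

lemma unit_root_mod:
  assumes "N > 0"
  shows "unit_root N (k mod int N) = unit_root N k"
proof -
  have "unit_root N (k - k mod int N) = 1"
    using assms by (simp add: unit_root_eq_1_iff minus_mod_eq_mult_div)
  then show ?thesis
    by (metis unit_root_add add_diff_cancel_left' diff_add_cancel mult.comm_neutral)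
qed

lemma cnj_unit_root: "cnj (unit_root N k) = unit_root N (- k)"
  unfolding unit_root_def exp_cnj by simp

lemma norm_unit_root [simp]: "norm (unit_root N k) = 1"
  unfolding unit_root_def by simp

lemma character_commute: "character N d m x = character N d x m"
  unfolding character_def by (simp add: mult.commute)

lemma norm_character [simp]: "norm (character N d m x) = 1"
  unfolding character_def by simp

lemma character_zadd:
  assumes "N > 0"
  shows "character N d (zadd N d a b) x = character N d a x * character N d b x"
proof -
  have "unit_root N (zadd N d a b i * x i) = unit_root N ((a i + b i) * x i)" if "i < d" for i
    using that unit_root_mod[OF assms, of "(a i + b i) * x i"]
          unit_root_mod[OF assms, of "(a i + b i) mod int N * x i"]
    by (simp add: zadd_def mod_mult_left_eq)
  then show ?thesis
    by (simp add: character_def unit_root_sum prod.distrib[symmetric] unit_root_add[symmetric]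
        distrib_right)
qed

lemma ZNd_eq_image_PiE:
  "ZNd N d = (\<lambda>x i. if i < d then x i else 0) ` (\<Pi>\<^sub>E i\<in>{..<d}. {0..<int N})"
proof (intro equalityI subsetI)
  fix x assume x: "x \<in> ZNd N d"
  then have "x = (\<lambda>i. if i < d then restrict x {..<d} i else 0)"
    by (auto simp: ZNd_def fun_eq_iff)
  moreover have "restrict x {..<d} \<in> (\<Pi>\<^sub>E i\<in>{..<d}. {0..<int N})"
    using x by (simp add: ZNd_def)
  ultimately show "x \<in> (\<lambda>x i. if i < d then x i else 0) ` (\<Pi>\<^sub>E i\<in>{..<d}. {0..<int N})"
    by blast
next
  fix x assume "x \<in> (\<lambda>x i. if i < d then x i else 0) ` (\<Pi>\<^sub>E i\<in>{..<d}. {0..<int N})"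
  then obtain y where "y \<in> (\<Pi>\<^sub>E i\<in>{..<d}. {0..<int N})" and "x = (\<lambda>i. if i < d then y i else 0)"
    by blast
  then show "x \<in> ZNd N d"
    by (simp add: ZNd_def PiE_iff)
qed

lemma inj_on_extend_PiE:
  "inj_on (\<lambda>x i. if i < d then x i else 0) (\<Pi>\<^sub>E i\<in>{..<d}. {0..<int N})"
proof (rule inj_onI)
  fix x y
  assume "x \<in> (\<Pi>\<^sub>E i\<in>{..<d}. {0..<int N})" "y \<in> (\<Pi>\<^sub>E i\<in>{..<d}. {0..<int N})"
    and eq: "(\<lambda>i. if i < d then x i else 0) = (\<lambda>i. if i < d then y i else 0)"
  moreover have "x i = y i" if "i \<in> {..<d}" for i
    using fun_cong[OF eq, of i] that by simp
  ultimately show "x = y"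
    by (intro PiE_ext) auto
qed

lemma finite_ZNd: "finite (ZNd N d)"
  by (simp add: ZNd_eq_image_PiE finite_PiE)

lemma card_ZNd: "card (ZNd N d) = N ^ d"
  by (simp add: ZNd_eq_image_PiE card_image[OF inj_on_extend_PiE] card_PiE)

lemma zadd_in_ZNd: "N > 0 \<Longrightarrow> zadd N d a b \<in> ZNd N d"
  unfolding zadd_def ZNd_def by auto

lemma bij_betw_zadd_ZNd:
  assumes "N > 0"
  shows "bij_betw (\<lambda>x. zadd N d x y) (ZNd N d) (ZNd N d)"
proof -
  have "inj_on (\<lambda>x. zadd N d x y) (ZNd N d)"
  proof (rule inj_onI, rule ext)
    fix x x' i assume x: "x \<in> ZNd N d" and x': "x' \<in> ZNd N d"
      and eq: "zadd N d x y = zadd N d x' y"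
    show "x i = x' i"
    proof (cases "i < d")
      case True
      then have "(x i + y i) mod int N = (x' i + y i) mod int N"
        using fun_cong[OF eq, of i] by (simp add: zadd_def)
      then have "((x i + y i) mod int N - y i) mod int N = ((x' i + y i) mod int N - y i) mod int N"
        by simp
      then have "x i mod int N = x' i mod int N"
        by (simp only: mod_diff_left_eq) simp
      then show ?thesis
        using x x' True by (simp add: ZNd_def)
    next
      case False
      then show ?thesis using x x' by (simp add: ZNd_def)
    qed
  qed
  moreover have "(\<lambda>x. zadd N d x y) ` ZNd N d \<subseteq> ZNd N d"
    using zadd_in_ZNd[OF assms] by blast
  ultimately show ?thesis
    by (simp add: bij_betw_def endo_inj_surj finite_ZNd)
qed

lemma sum_character_eq_0:
  assumes "N > 0" and "i < d" and "\<not> int N dvd z i"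
  shows "(\<Sum>x\<in>ZNd N d. character N d z x) = 0"
proof -
  define y :: "nat \<Rightarrow> int" where "y j = (if j = i then 1 else 0)" for j
  have "character N d z y = unit_root N (z i)"
    using \<open>i < d\<close> by (simp add: character_def y_def if_distrib cong: if_cong)
  then have y_ne_1: "character N d z y \<noteq> 1"
    using assms by (simp add: unit_root_eq_1_iff)
  let ?S = "\<Sum>x\<in>ZNd N d. character N d z x"
  have "?S = (\<Sum>x\<in>ZNd N d. character N d z (zadd N d x y))"
    using sum.reindex_bij_betw[OF bij_betw_zadd_ZNd[OF \<open>N > 0\<close>]] by metis
  also have "\<dots> = ?S * character N d z y"
    by (simp add: character_commute[of N d z] character_zadd[OF \<open>N > 0\<close>] sum_distrib_right)
  finally have "?S * (1 - character N d z y) = 0"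
    by (simp add: algebra_simps)
  then show "?S = 0"
    using y_ne_1 by simp
qed

lemma character_mult_cnj:
  "character N d a x * cnj (character N d b x) = character N d (\<lambda>i. a i - b i) x"
  by (simp add: character_def cnj_unit_root unit_root_add[symmetric] sum_negf[symmetric]
      sum.distrib[symmetric] left_diff_distrib)

lemma character_orthogonal:
  assumes "N > 0" and a: "a \<in> ZNd N d" and b: "b \<in> ZNd N d"
  shows "(\<Sum>x\<in>ZNd N d. character N d a x * cnj (character N d b x))
    = (if a = b then of_nat N ^ d else 0)"
proof (cases "a = b")
  case True
  have "character N d a x * cnj (character N d a x) = 1" for x
    by (simp only: character_mult_cnj) (simp add: character_def)
  then show ?thesis using True by (simp add: card_ZNd)
next
  case False
  then obtain i where "a i \<noteq> b i" by blast
  moreover have "i < d"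
  proof (rule ccontr)
    assume "\<not> i < d"
    then have "a i = 0" "b i = 0"
      using a b by (simp_all add: ZNd_def)
    with \<open>a i \<noteq> b i\<close> show False by simp
  qed
  moreover have "0 \<le> a i" "a i < int N" "0 \<le> b i" "b i < int N"
    using a b \<open>i < d\<close> by (simp_all add: ZNd_def)
  ultimately have "\<not> int N dvd (a i - b i)"
    using dvd_imp_le_int[of "a i - b i" "int N"] by arith
  then show ?thesis
    using False sum_character_eq_0[OF \<open>N > 0\<close> \<open>i < d\<close>] by (simp add: character_mult_cnj)
qed

section \<open>Fourier transform\<close>

definition fourier_scale :: "nat \<Rightarrow> nat \<Rightarrow> real" where
  "fourier_scale N d = real N powr (- real d / 2)"

lemma fourier_scale_pos: "N > 0 \<Longrightarrow> fourier_scale N d > 0"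
  unfolding fourier_scale_def by simp

lemma fourier_scale_sq: "N > 0 \<Longrightarrow> fourier_scale N d ^ 2 = 1 / real N ^ d"
proof -
  assume "N > 0"
  have "fourier_scale N d ^ 2 = real N powr (- real d)"
    by (simp add: fourier_scale_def power2_eq_square powr_add[symmetric])
  also have "\<dots> = 1 / real N ^ d"
    using \<open>N > 0\<close> by (simp add: powr_minus powr_realpow divide_inverse)
  finally show ?thesis .
qed

lemma dft_eq_character_sum:
  "dft N d f m = of_real (fourier_scale N d) * (\<Sum>x\<in>ZNd N d. f x * cnj (character N d m x))"
  by (simp only: character_def cnj_unit_root) (simp add: dft_def fourier_scale_def unit_root_def)

lemma dft_inversion:
  assumes "N > 0" and x: "x \<in> ZNd N d"
  shows "of_real (fourier_scale N d) * (\<Sum>m\<in>ZNd N d. dft N d h m * character N d m x) = h x"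
proof -
  let ?Z = "ZNd N d" and ?c = "fourier_scale N d"
  have "(\<Sum>m\<in>?Z. dft N d h m * character N d m x)
      = of_real ?c * (\<Sum>m\<in>?Z. \<Sum>y\<in>?Z. h y * (character N d x m * cnj (character N d y m)))"
    unfolding dft_eq_character_sum sum_distrib_left sum_distrib_right
    by (intro sum.cong refl) (simp add: character_commute algebra_simps)
  also have "(\<Sum>m\<in>?Z. \<Sum>y\<in>?Z. h y * (character N d x m * cnj (character N d y m)))
      = (\<Sum>y\<in>?Z. h y * (\<Sum>m\<in>?Z. character N d x m * cnj (character N d y m)))"
    by (subst sum.swap) (simp add: sum_distrib_left)
  also have "\<dots> = h x * of_nat N ^ d"
    using x by (simp add: character_orthogonal[OF \<open>N > 0\<close> x] finite_ZNd if_distrib cong: if_cong)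
  finally have "of_real ?c * (\<Sum>m\<in>?Z. dft N d h m * character N d m x)
      = h x * of_real (?c ^ 2 * real N ^ d)"
    by (simp add: power2_eq_square)
  then show ?thesis
    using \<open>N > 0\<close> by (simp add: fourier_scale_sq)
qed

lemma parseval:
  assumes "N > 0"
  shows "(\<Sum>m\<in>ZNd N d. (norm (dft N d h m))\<^sup>2) = (\<Sum>x\<in>ZNd N d. (norm (h x))\<^sup>2)"
proof -
  let ?Z = "ZNd N d" and ?c = "fourier_scale N d"
  have "complex_of_real (\<Sum>m\<in>?Z. (norm (dft N d h m))\<^sup>2) = (\<Sum>m\<in>?Z. dft N d h m * cnj (dft N d h m))"
    by (simp add: complex_norm_square[symmetric])
  also have "\<dots> = (\<Sum>m\<in>?Z. dft N d h m * (of_real ?c * (\<Sum>y\<in>?Z. cnj (h y) * character N d m y)))"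
    by (intro sum.cong refl) (simp add: dft_eq_character_sum[of N d h] sum_distrib_left)
  also have "\<dots> = (\<Sum>y\<in>?Z. cnj (h y) * (of_real ?c * (\<Sum>m\<in>?Z. dft N d h m * character N d m y)))"
    by (simp add: sum_distrib_left sum_distrib_right algebra_simps) (rule sum.swap)
  also have "\<dots> = (\<Sum>y\<in>?Z. h y * cnj (h y))"
    using dft_inversion[OF \<open>N > 0\<close>] by (simp add: mult.commute)
  also have "\<dots> = complex_of_real (\<Sum>y\<in>?Z. (norm (h y))\<^sup>2)"
    by (simp only: of_real_sum complex_norm_square)
  finally show ?thesis
    by (simp only: of_real_eq_iff)
qed

lemma dft_diff: "dft N d (\<lambda>x. g x - f x) m = dft N d g m - dft N d f m"
  by (simp add: dft_def sum_subtractf left_diff_distrib right_diff_distrib)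

lemma card_supp_diff_le:
  "card (supp N d (\<lambda>x. g x - f x)) \<le> card (supp N d g) + card (supp N d f)"
proof -
  have "supp N d (\<lambda>x. g x - f x) \<subseteq> supp N d g \<union> supp N d f"
    by (auto simp: supp_def)
  then have "card (supp N d (\<lambda>x. g x - f x)) \<le> card (supp N d g \<union> supp N d f)"
    by (intro card_mono) (auto simp: supp_def finite_ZNd)
  then show ?thesis
    using card_Un_le order_trans by blast
qed

section \<open>Additive energy\<close>

lemma zadd_commute: "zadd N d a b = zadd N d b a"
  unfolding zadd_def by (rule ext) (simp add: add.commute)

definition weighted_energy ::
    "nat \<Rightarrow> nat \<Rightarrow> (nat \<Rightarrow> int) set \<Rightarrow> ((nat \<Rightarrow> int) \<Rightarrow> real) \<Rightarrow> real" where
  "weighted_energy N d A a = (\<Sum>p\<in>A \<times> A. \<Sum>q\<in>A \<times> A.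
     if zadd N d (fst p) (snd p) = zadd N d (fst q) (snd q)
     then a (fst p) * a (snd p) * (a (fst q) * a (snd q)) else 0)"

lemma energy_eq_weighted_energy:
  assumes "finite A"
  shows "real (energy N d A) = weighted_energy N d A (\<lambda>_. 1)"
proof -
  let ?P = "\<lambda>z. zadd N d (fst (fst z)) (snd (fst z)) = zadd N d (fst (snd z)) (snd (snd z))"
  let ?Y = "{z \<in> (A \<times> A) \<times> (A \<times> A). ?P z}"
  let ?flat = "\<lambda>((x1, x2), (x3, x4)). (x1, x2, x3, x4)"
  have "{(x1, x2, x3, x4). x1 \<in> A \<and> x2 \<in> A \<and> x3 \<in> A \<and> x4 \<in> A \<and>
      zadd N d x1 x2 = zadd N d x3 x4} = ?flat ` ?Y"
  proof (intro equalityI subsetI)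
    fix t assume "t \<in> {(x1, x2, x3, x4). x1 \<in> A \<and> x2 \<in> A \<and> x3 \<in> A \<and> x4 \<in> A \<and>
      zadd N d x1 x2 = zadd N d x3 x4}"
    then obtain x1 x2 x3 x4 where "t = (x1, x2, x3, x4)" and "((x1, x2), (x3, x4)) \<in> ?Y"
      by auto
    then show "t \<in> ?flat ` ?Y"
      by (intro image_eqI[of _ _ "((x1, x2), (x3, x4))"]) simp_all
  qed auto
  moreover have "inj_on ?flat ?Y"
    by (auto simp: inj_on_def)
  ultimately have "energy N d A = card ?Y"
    by (simp add: energy_def card_image)
  also have "\<dots> = (\<Sum>z\<in>(A \<times> A) \<times> (A \<times> A). if ?P z then 1 else 0)"
    using assms by (simp add: sum.inter_filter[symmetric])
  finally show ?thesis
    by (simp add: weighted_energy_def sum.cartesian_product case_prod_unfold if_distrib[of real]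
        cong: if_cong)
qed

lemma weighted_energy_minus_energy:
  assumes "finite A"
  shows "weighted_energy N d A a - B ^ 4 * real (energy N d A) = (\<Sum>p\<in>A \<times> A. \<Sum>q\<in>A \<times> A.
     if zadd N d (fst p) (snd p) = zadd N d (fst q) (snd q)
     then a (fst p) * a (snd p) * (a (fst q) * a (snd q)) - B ^ 4 else 0)"
  unfolding energy_eq_weighted_energy[OF assms] weighted_energy_def
    sum_distrib_left sum_subtractf[symmetric]
  by (intro sum.cong refl) simp

lemma sum_pair_and_swap:
  "(\<Sum>q\<in>{p, prod.swap p}. G q) = G p + (if fst p = snd p then 0 else G (prod.swap p))"
  by (cases p) auto

lemma sum_pairs_counted_with_swap:
  fixes X :: "'a \<times> 'a \<Rightarrow> real"
  assumes "finite A"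
  shows "(\<Sum>p\<in>A \<times> A. X p + (if fst p = snd p then 0 else X p))
    = 2 * (\<Sum>p\<in>A \<times> A. X p) - (\<Sum>m\<in>A. X (m, m))"
proof -
  have "(\<Sum>p\<in>A \<times> A. if fst p = snd p then X p else 0)
      = (\<Sum>x\<in>A. \<Sum>y\<in>A. if x = y then X (x, y) else 0)"
    unfolding sum.cartesian_product by (intro sum.cong refl) (auto split: prod.splits)
  also have "\<dots> = (\<Sum>m\<in>A. X (m, m))"
    using assms by simp
  moreover
  have "(\<Sum>p\<in>A \<times> A. X p + (if fst p = snd p then 0 else X p))
      = (\<Sum>p\<in>A \<times> A. 2 * X p - (if fst p = snd p then X p else 0))"
    by (intro sum.cong) auto
  ultimately show ?thesis
    by (simp add: sum_subtractf sum_distrib_left)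
qed

text \<open>Among the solutions of \<open>x\<^sub>1 + x\<^sub>2 = x\<^sub>3 + x\<^sub>4\<close> in \<open>A\<close> are the trivial ones
  \<open>(x\<^sub>3, x\<^sub>4) \<in> {(x\<^sub>1, x\<^sub>2), (x\<^sub>2, x\<^sub>1)}\<close>; for nonpositive summands the others only decrease the sum.\<close>
lemma sum_additive_quadruples_le_trivial:
  fixes F :: "((nat \<Rightarrow> int) \<times> (nat \<Rightarrow> int)) \<Rightarrow> ((nat \<Rightarrow> int) \<times> (nat \<Rightarrow> int)) \<Rightarrow> real"
  assumes "finite A" and nonpos: "\<And>p q. p \<in> A \<times> A \<Longrightarrow> q \<in> A \<times> A \<Longrightarrow> F p q \<le> 0"
  shows "(\<Sum>p\<in>A \<times> A. \<Sum>q\<in>A \<times> A.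
      if zadd N d (fst p) (snd p) = zadd N d (fst q) (snd q) then F p q else 0)
    \<le> (\<Sum>p\<in>A \<times> A. \<Sum>q\<in>{p, prod.swap p}. F p q)"
proof (rule sum_mono)
  fix p assume p: "p \<in> A \<times> A"
  let ?Q = "{q \<in> A \<times> A. zadd N d (fst p) (snd p) = zadd N d (fst q) (snd q)}"
  have trivial: "{p, prod.swap p} \<subseteq> ?Q"
    using p by (auto simp: zadd_commute)
  have "(\<Sum>q\<in>A \<times> A. if zadd N d (fst p) (snd p) = zadd N d (fst q) (snd q) then F p q else 0)
      = (\<Sum>q\<in>?Q. F p q)"
    using assms(1) by (simp add: sum.inter_filter)
  also have "\<dots> = (\<Sum>q\<in>?Q - {p, prod.swap p}. F p q) + (\<Sum>q\<in>{p, prod.swap p}. F p q)"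
    using assms(1) trivial by (intro sum.subset_diff) auto
  also have "\<dots> \<le> (\<Sum>q\<in>{p, prod.swap p}. F p q)"
    using p by (auto intro!: sum_nonpos nonpos)
  finally show "(\<Sum>q\<in>A \<times> A. if zadd N d (fst p) (snd p) = zadd N d (fst q) (snd q) then F p q else 0)
      \<le> (\<Sum>q\<in>{p, prod.swap p}. F p q)" .
qed

lemma energy_ge_trivial:
  assumes "finite A"
  shows "2 * real (card A) ^ 2 - real (card A) \<le> real (energy N d A)"
proof -
  have "- real (energy N d A) = (\<Sum>p\<in>A \<times> A. \<Sum>q\<in>A \<times> A.
      if zadd N d (fst p) (snd p) = zadd N d (fst q) (snd q) then - 1 else 0)"
    unfolding energy_eq_weighted_energy[OF assms] weighted_energy_def sum_negf[symmetric]
    by (intro sum.cong refl) simp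
  also have "\<dots> \<le> (\<Sum>p\<in>A \<times> A. \<Sum>q\<in>{p, prod.swap p}. - 1)"
    using sum_additive_quadruples_le_trivial[OF assms, of "\<lambda>_ _. - 1"] by simp
  also have "\<dots> = (\<Sum>p\<in>A \<times> A. - 1 + (if fst p = snd p then 0 else - 1))"
    by (simp only: sum_pair_and_swap)
  also have "\<dots> = - 2 * real (card A) ^ 2 + real (card A)"
    using sum_pairs_counted_with_swap[OF assms, of "\<lambda>_. - 1"]
    by (simp add: card_cartesian_product power2_eq_square)
  finally show ?thesis by simp
qed

lemma mult4_le_pow4:
  fixes w x y z B :: real
  assumes "0 \<le> w" "w \<le> B" "0 \<le> x" "x \<le> B" "0 \<le> y" "y \<le> B" "0 \<le> z" "z \<le> B"
  shows "w * x * (y * z) \<le> B ^ 4"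
proof -
  have "w * x \<le> B * B" "y * z \<le> B * B"
    using assms by (auto intro!: mult_mono)
  then have "w * x * (y * z) \<le> (B * B) * (B * B)"
    using assms by (intro mult_mono) auto
  then show ?thesis
    by (simp add: power4_eq_xxxx mult_ac)
qed

lemma weighted_energy_le_energy:
  assumes "finite A" and bounds: "\<And>m. m \<in> A \<Longrightarrow> 0 \<le> a m \<and> a m \<le> B"
  shows "weighted_energy N d A a \<le> B ^ 4 * real (energy N d A)"
proof -
  have "weighted_energy N d A a - B ^ 4 * real (energy N d A) \<le> 0"
    unfolding weighted_energy_minus_energy[OF assms(1)]
    using bounds by (intro sum_nonpos) (auto simp: mem_Times_iff intro!: mult4_le_pow4)
  then show ?thesis by simp
qed

lemma weighted_energy_le:
  assumes "finite A" and bounds: "\<And>m. m \<in> A \<Longrightarrow> 0 \<le> a m \<and> a m \<le> B"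
  shows "weighted_energy N d A a \<le> 2 * (\<Sum>m\<in>A. (a m)\<^sup>2)\<^sup>2 - (\<Sum>m\<in>A. (a m) ^ 4)
    + (real (energy N d A) - (2 * real (card A) ^ 2 - real (card A))) * B ^ 4"
proof -
  let ?X = "\<lambda>p. (a (fst p) * a (snd p))\<^sup>2 - B ^ 4"
  have "weighted_energy N d A a - B ^ 4 * real (energy N d A) = (\<Sum>p\<in>A \<times> A. \<Sum>q\<in>A \<times> A.
     if zadd N d (fst p) (snd p) = zadd N d (fst q) (snd q)
     then a (fst p) * a (snd p) * (a (fst q) * a (snd q)) - B ^ 4 else 0)"
    by (rule weighted_energy_minus_energy[OF assms(1)])
  also have "\<dots> \<le> (\<Sum>p\<in>A \<times> A. \<Sum>q\<in>{p, prod.swap p}.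
      a (fst p) * a (snd p) * (a (fst q) * a (snd q)) - B ^ 4)"
    using bounds by (intro sum_additive_quadruples_le_trivial[OF assms(1)])
      (auto simp: mem_Times_iff intro!: mult4_le_pow4)
  also have "\<dots> = (\<Sum>p\<in>A \<times> A. ?X p + (if fst p = snd p then 0 else ?X p))"
    by (simp add: sum_pair_and_swap power2_eq_square mult_ac cong: if_cong)
  also have "\<dots> = 2 * (\<Sum>p\<in>A \<times> A. ?X p) - (\<Sum>m\<in>A. ?X (m, m))"
    by (rule sum_pairs_counted_with_swap[OF assms(1)])
  also have "(\<Sum>p\<in>A \<times> A. ?X p) = (\<Sum>m\<in>A. (a m)\<^sup>2)\<^sup>2 - real (card A) ^ 2 * B ^ 4"
    by (simp add: sum_subtractf card_cartesian_product power2_eq_square[of "sum _ _"] sum_product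
        sum.cartesian_product power_mult_distrib case_prod_unfold power2_eq_square[of "real (card A)"])
  also have "(\<Sum>m\<in>A. ?X (m, m)) = (\<Sum>m\<in>A. (a m) ^ 4) - real (card A) * B ^ 4"
    by (simp add: sum_subtractf power2_eq_square power4_eq_xxxx mult_ac)
  finally show ?thesis
    by (simp add: algebra_simps power2_eq_square)
qed

section \<open>Fourth moments of character sums\<close>

lemma sum_norm_sq_character_sum:
  assumes "N > 0" and "finite B" and k: "k ` B \<subseteq> ZNd N d"
  shows "complex_of_real (\<Sum>x\<in>ZNd N d. (norm (\<Sum>p\<in>B. W p * character N d (k p) x))\<^sup>2)
    = of_nat N ^ d * (\<Sum>p\<in>B. \<Sum>q\<in>B. if k p = k q then W p * cnj (W q) else 0)"
proof -
  let ?Z = "ZNd N d"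
  have "complex_of_real (\<Sum>x\<in>?Z. (norm (\<Sum>p\<in>B. W p * character N d (k p) x))\<^sup>2)
      = (\<Sum>x\<in>?Z. \<Sum>p\<in>B. \<Sum>q\<in>B.
          W p * cnj (W q) * (character N d (k p) x * cnj (character N d (k q) x)))"
    by (simp only: of_real_sum complex_norm_square cnj_sum sum_product complex_cnj_mult mult_ac)
  also have "\<dots> = (\<Sum>p\<in>B. \<Sum>q\<in>B.
      W p * cnj (W q) * (\<Sum>x\<in>?Z. character N d (k p) x * cnj (character N d (k q) x)))"
    by (simp only: sum_distrib_left sum.swap[of _ ?Z])
  also have "\<dots> = of_nat N ^ d * (\<Sum>p\<in>B. \<Sum>q\<in>B. if k p = k q then W p * cnj (W q) else 0)"
    using k by (simp add: character_orthogonal[OF \<open>N > 0\<close>] image_subset_iff sum_distrib_left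
        if_distrib mult.commute cong: if_cong)
  finally show ?thesis .
qed

lemma sum_norm_pow4_character_sum_le:
  assumes "N > 0" and "A \<subseteq> ZNd N d"
  shows "(\<Sum>x\<in>ZNd N d. (norm (\<Sum>m\<in>A. v m * character N d m x)) ^ 4)
    \<le> real N ^ d * weighted_energy N d A (\<lambda>m. norm (v m))"
proof -
  let ?Z = "ZNd N d" and ?w = "\<lambda>x. \<Sum>m\<in>A. v m * character N d m x"
  let ?V = "\<lambda>p. v (fst p) * v (snd p)" and ?k = "\<lambda>p. zadd N d (fst p) (snd p)"
  have finite_A: "finite A"
    using assms(2) finite_ZNd finite_subset by blast
  txt \<open>\<open>|w|\<^sup>4 = |w\<^sup>2|\<^sup>2\<close>, and \<open>w\<^sup>2\<close> is a character sum indexed by pairs of frequencies.\<close>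
  have square: "?w x * ?w x = (\<Sum>p\<in>A \<times> A. ?V p * character N d (?k p) x)" for x
    by (simp add: sum_product sum.cartesian_product character_zadd[OF \<open>N > 0\<close>] case_prod_unfold
        mult_ac)
  have "(\<Sum>x\<in>?Z. (norm (?w x)) ^ 4) = (\<Sum>x\<in>?Z. (norm (?w x * ?w x))\<^sup>2)"
    by (simp add: norm_mult power2_eq_square power4_eq_xxxx mult_ac)
  also have "\<dots> = norm (complex_of_real (\<Sum>x\<in>?Z. (norm (?w x * ?w x))\<^sup>2))"
    unfolding norm_of_real by (simp add: sum_nonneg)
  also have "\<dots> = real N ^ d * norm (\<Sum>p\<in>A \<times> A. \<Sum>q\<in>A \<times> A.
      if ?k p = ?k q then ?V p * cnj (?V q) else 0)"
    unfolding square using assms(1) finite_A zadd_in_ZNd[OF \<open>N > 0\<close>]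
    by (subst sum_norm_sq_character_sum) (auto simp: norm_mult norm_power)
  also have "\<dots> \<le> real N ^ d * (\<Sum>p\<in>A \<times> A. \<Sum>q\<in>A \<times> A.
      norm (if ?k p = ?k q then ?V p * cnj (?V q) else 0))"
    by (intro mult_left_mono order_trans[OF norm_sum sum_mono] norm_sum) auto
  also have "\<dots> = real N ^ d * weighted_energy N d A (\<lambda>m. norm (v m))"
    by (simp add: weighted_energy_def norm_mult if_distrib cong: if_cong)
  finally show ?thesis .
qed

lemma norm_sum_unimodular_sq_le:
  fixes a w :: "'a \<Rightarrow> complex"
  assumes "\<And>y. y \<in> A \<Longrightarrow> norm (w y) = 1"
  shows "(norm (\<Sum>y\<in>A. a y * w y))\<^sup>2 \<le> real (card A) * (\<Sum>y\<in>A. (norm (a y))\<^sup>2)"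
proof -
  have "(\<Sum>y\<in>A. norm (a y * w y)) = (\<Sum>y\<in>A. norm (a y))"
    by (intro sum.cong) (simp_all add: norm_mult assms)
  then have "norm (\<Sum>y\<in>A. a y * w y) \<le> (\<Sum>y\<in>A. norm (a y))"
    by (metis norm_sum)
  then have "(norm (\<Sum>y\<in>A. a y * w y))\<^sup>2 \<le> (\<Sum>y\<in>A. norm (a y))\<^sup>2"
    by (simp add: power_mono)
  also have "\<dots> \<le> (\<Sum>y\<in>A. (norm (a y))\<^sup>2) * real (card A)"
    by (rule sum_squared_le_sum_of_squares)
  finally show ?thesis
    by (simp add: mult.commute)
qed

lemma sqrt_pow4: "0 \<le> x \<Longrightarrow> sqrt x ^ 4 = x\<^sup>2"
  by (metis (no_types) power_mult real_sqrt_pow2 num_double numeral_times_numeral)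

lemma cube_bound_sqrt_form:
  fixes n s t K \<alpha> :: real
  assumes "0 < n" "0 < s" "0 < t" "0 \<le> K" and cube: "n ^ 3 \<le> s ^ 3 * (K * t powr \<alpha>)"
  shows "n\<^sup>2 \<le> s\<^sup>2 * sqrt (K / t powr (3 - \<alpha>)) * sqrt (n / (t * s)) * t\<^sup>2"
proof (rule power2_le_imp_le)
  have "(s\<^sup>2 * sqrt (K / t powr (3 - \<alpha>)) * sqrt (n / (t * s)) * t\<^sup>2)\<^sup>2
      = s ^ 4 * (K / t powr (3 - \<alpha>)) * (n / (t * s)) * t ^ 4"
    using assms by (simp add: power_mult_distrib)
  also have "\<dots> = n * (s ^ 3 * (K * t powr \<alpha>))"
    using assms by (simp add: powr_diff powr_realpow field_simps power_numeral_reduce)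
  also have "\<dots> \<ge> n * n ^ 3"
    using cube \<open>0 < n\<close> by simp
  finally show "(n\<^sup>2)\<^sup>2 \<le> (s\<^sup>2 * sqrt (K / t powr (3 - \<alpha>)) * sqrt (n / (t * s)) * t\<^sup>2)\<^sup>2"
    by (simp add: power_numeral_reduce)
  show "0 \<le> s\<^sup>2 * sqrt (K / t powr (3 - \<alpha>)) * sqrt (n / (t * s)) * t\<^sup>2"
    using assms by (intro mult_nonneg_nonneg real_sqrt_ge_zero divide_nonneg_nonneg) auto
qed

lemma combine_uncertainty_bounds:
  fixes n s \<tau> t L K \<alpha> :: real
  assumes n_pos: "0 < n" and s: "1 \<le> s" and \<tau>: "0 \<le> \<tau>" "\<tau> \<le> t" and K: "0 \<le> K"
    and L: "2 * s\<^sup>2 - s \<le> L"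
    and support_spectrum: "n \<le> s * \<tau>"
    and energy_support: "n ^ 3 \<le> s ^ 3 * (K * t powr \<alpha>)"
    and energy_spectrum: "n \<le> \<tau> * (2 - 1 / s + (L - (2 * s\<^sup>2 - s)) * (\<tau> / n)\<^sup>2)"
  shows "n ^ 3 \<le> t ^ 3 * (L - s * (s - 1) * (1 - sqrt (K / t powr (3 - \<alpha>)) * sqrt (n / (t * s)))
           - s\<^sup>2 * (1 - n / (t * s)))"
proof -
  txt \<open>Multiplied by \<open>n\<^sup>2\<close>, \<open>energy_spectrum\<close> splits into three terms, bounded by
    \<open>support_spectrum\<close>, by \<open>energy_support\<close> (via \<open>cube_bound_sqrt_form\<close>) and by \<open>\<tau> \<le> t\<close>.\<close>
  define a b where "a = sqrt (K / t powr (3 - \<alpha>))" and "b = sqrt (n / (t * s))"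
  have "0 < s * \<tau>"
    using n_pos support_spectrum by linarith
  then have t_pos: "0 < t"
    using s \<tau> by (simp add: zero_less_mult_iff)
  have ab: "n\<^sup>2 \<le> s\<^sup>2 * a * b * t\<^sup>2"
    unfolding a_def b_def using n_pos s t_pos K energy_support by (intro cube_bound_sqrt_form) auto
  have ab_nonneg: "0 \<le> s\<^sup>2 * a * b * t\<^sup>2"
    using ab by (rule order_trans[OF zero_le_power2])
  have "n ^ 3 = n * n\<^sup>2"
    by (simp add: power2_eq_square power3_eq_cube)
  also have "\<dots> \<le> \<tau> * (2 - 1 / s + (L - (2 * s\<^sup>2 - s)) * (\<tau> / n)\<^sup>2) * n\<^sup>2"
    by (rule mult_right_mono[OF energy_spectrum]) simp
  also have "\<dots> = n\<^sup>2 * \<tau> + n\<^sup>2 * \<tau> * (1 - 1 / s) + (L - (2 * s\<^sup>2 - s)) * \<tau> ^ 3"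
    using n_pos by (simp add: field_simps power2_eq_square power3_eq_cube)
  also have "\<dots> \<le> s * n * t\<^sup>2 + s\<^sup>2 * a * b * t\<^sup>2 * t * (1 - 1 / s) + (L - (2 * s\<^sup>2 - s)) * t ^ 3"
  proof (intro add_mono)
    have "n * (n * \<tau>) \<le> (s * \<tau>) * (n * \<tau>)"
      by (rule mult_right_mono[OF support_spectrum]) (use n_pos \<tau> in simp)
    then have "n\<^sup>2 * \<tau> \<le> (s * \<tau>) * (n * \<tau>)"
      by (simp add: power2_eq_square mult.assoc)
    also have "\<dots> \<le> s * n * t\<^sup>2"
      using s n_pos \<tau> by (simp add: power2_eq_square mult_ac mult_mono)
    finally show "n\<^sup>2 * \<tau> \<le> s * n * t\<^sup>2" .
    show "n\<^sup>2 * \<tau> * (1 - 1 / s) \<le> s\<^sup>2 * a * b * t\<^sup>2 * t * (1 - 1 / s)"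
      using ab ab_nonneg \<tau> s by (intro mult_right_mono mult_mono) auto
    show "(L - (2 * s\<^sup>2 - s)) * \<tau> ^ 3 \<le> (L - (2 * s\<^sup>2 - s)) * t ^ 3"
      using L \<tau> by (intro mult_left_mono power_mono) auto
  qed
  also have "\<dots> = t ^ 3 * (L - s * (s - 1) * (1 - a * b) - s\<^sup>2 * (1 - n / (t * s)))"
    using t_pos s by (simp add: field_simps power2_eq_square power3_eq_cube)
  finally show ?thesis
    by (simp add: a_def b_def)
qed



section \<open>Functions with sparse Fourier transform\<close>

locale sparse_spectrum =
  fixes N d :: nat and h :: "(nat \<Rightarrow> int) \<Rightarrow> complex" and S :: "(nat \<Rightarrow> int) set"
  assumes N_pos: "N > 0"
    and spectrum_subset: "S \<subseteq> ZNd N d"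
    and nonzero: "supp N d h \<noteq> {}"
    and dft_vanishes: "\<And>m. m \<in> ZNd N d \<Longrightarrow> m \<notin> S \<Longrightarrow> dft N d h m = 0"
begin

abbreviation "n \<equiv> real N ^ d"
abbreviation "c \<equiv> fourier_scale N d"
abbreviation "T \<equiv> supp N d h"
abbreviation "mass \<equiv> \<Sum>x\<in>ZNd N d. (norm (h x))\<^sup>2"

lemma n_pos: "n > 0"
  using N_pos by simp

lemma c_pow4: "c ^ 4 = 1 / n\<^sup>2"
  using fourier_scale_sq[OF N_pos, of d] by (simp add: power4_eq_xxxx power2_eq_square[symmetric]
      flip: power_mult_distrib)

lemma finite_support: "finite T"
  using finite_ZNd by (simp add: supp_def)

lemma finite_spectrum: "finite S"
  using spectrum_subset finite_ZNd finite_subset by blast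

lemma sum_over_support:
  "(\<Sum>x\<in>ZNd N d. h x * G x) = (\<Sum>x\<in>T. h x * G x)"
  by (rule sum.mono_neutral_right) (auto simp: finite_ZNd supp_def)

lemma sum_over_spectrum:
  "(\<Sum>m\<in>ZNd N d. dft N d h m * G m) = (\<Sum>m\<in>S. dft N d h m * G m)"
  using spectrum_subset by (intro sum.mono_neutral_right) (auto simp: finite_ZNd dft_vanishes)

lemma mass_eq_support: "mass = (\<Sum>x\<in>T. (norm (h x))\<^sup>2)"
  by (rule sum.mono_neutral_right) (auto simp: finite_ZNd supp_def)

lemma mass_eq_spectrum: "mass = (\<Sum>m\<in>S. (norm (dft N d h m))\<^sup>2)"
  using spectrum_subset parseval[OF N_pos, of d h]
  by (metis (no_types, lifting) sum.mono_neutral_right finite_ZNd dft_vanishes norm_zero zero_power2 DiffE)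

lemma mass_pos: "mass > 0"
proof -
  obtain x where "x \<in> T" using nonzero by blast
  then have "0 < (norm (h x))\<^sup>2" by (simp add: supp_def)
  also have "\<dots> \<le> mass"
    unfolding mass_eq_support using \<open>x \<in> T\<close> finite_support by (intro member_le_sum) auto
  finally show ?thesis .
qed

lemma dft_eq_support_sum: "dft N d h m = of_real c * cnj (\<Sum>y\<in>T. cnj (h y) * character N d y m)"
  by (simp add: dft_eq_character_sum sum_over_support character_commute)

lemma eq_spectrum_sum:
  assumes "x \<in> ZNd N d"
  shows "h x = of_real c * (\<Sum>m\<in>S. dft N d h m * character N d m x)"
  using dft_inversion[OF N_pos assms, of h] sum_over_spectrum[of "\<lambda>m. character N d m x"] by simp

lemma norm_dft_sq_le: "(norm (dft N d h m))\<^sup>2 \<le> real (card T) * mass / n"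
proof -
  have "(norm (dft N d h m))\<^sup>2 = c\<^sup>2 * (norm (\<Sum>y\<in>T. cnj (h y) * character N d y m))\<^sup>2"
    by (simp only: dft_eq_support_sum norm_mult complex_mod_cnj norm_of_real power_mult_distrib
        power2_abs)
  also have "\<dots> \<le> c\<^sup>2 * (real (card T) * mass)"
    using norm_sum_unimodular_sq_le[of T "\<lambda>y. character N d y m" "\<lambda>y. cnj (h y)"]
    by (intro mult_left_mono) (simp_all add: mass_eq_support)
  finally show ?thesis
    by (simp add: fourier_scale_sq[OF N_pos])
qed

lemma norm_sq_le:
  assumes "x \<in> ZNd N d"
  shows "(norm (h x))\<^sup>2 \<le> real (card S) * mass / n"
proof -
  have "(norm (h x))\<^sup>2 = c\<^sup>2 * (norm (\<Sum>m\<in>S. dft N d h m * character N d m x))\<^sup>2"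
    using fourier_scale_pos[OF N_pos]
    by (simp add: eq_spectrum_sum[OF assms] norm_mult power_mult_distrib)
  also have "\<dots> \<le> c\<^sup>2 * (real (card S) * mass)"
    using norm_sum_unimodular_sq_le[of S "\<lambda>m. character N d m x" "dft N d h"]
    by (intro mult_left_mono) (simp_all add: mass_eq_spectrum)
  finally show ?thesis
    by (simp add: fourier_scale_sq[OF N_pos])
qed

theorem card_support_spectrum_ge: "n \<le> real (card S) * real (card T)"
proof -
  have "mass = (\<Sum>m\<in>S. (norm (dft N d h m))\<^sup>2)"
    by (rule mass_eq_spectrum)
  also have "\<dots> \<le> (\<Sum>m\<in>S. real (card T) * mass / n)"
    by (intro sum_mono norm_dft_sq_le)
  finally have "mass \<le> (\<Sum>m\<in>S. real (card T) * mass / n)" .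
  then have "mass * n \<le> (real (card S) * real (card T)) * mass"
    using n_pos by (simp add: field_simps)
  then show ?thesis
    using mass_pos by (simp add: mult.commute)
qed

lemma card_spectrum_ge_1: "1 \<le> card S"
proof (rule ccontr)
  assume "\<not> 1 \<le> card S"
  then have "card S = 0" by simp
  then have "n \<le> 0"
    using card_support_spectrum_ge by simp
  with n_pos show False by linarith
qed

lemma mass_sq_le_card_spectrum: "mass\<^sup>2 \<le> real (card S) * (\<Sum>m\<in>S. (norm (dft N d h m)) ^ 4)"
  using sum_squared_le_sum_of_squares[of "\<lambda>m. (norm (dft N d h m))\<^sup>2" S]
  by (simp add: mass_eq_spectrum[symmetric] mult.commute flip: power_mult)

lemma mass_sq_le_card_support: "mass\<^sup>2 \<le> real (card T) * (\<Sum>x\<in>ZNd N d. (norm (h x)) ^ 4)"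
proof -
  have "mass\<^sup>2 \<le> real (card T) * (\<Sum>x\<in>T. (norm (h x)) ^ 4)"
    using sum_squared_le_sum_of_squares[of "\<lambda>x. (norm (h x))\<^sup>2" T]
    by (simp add: mass_eq_support[symmetric] mult.commute flip: power_mult)
  also have "\<dots> \<le> real (card T) * (\<Sum>x\<in>ZNd N d. (norm (h x)) ^ 4)"
    by (intro mult_left_mono sum_mono2) (auto simp: finite_ZNd supp_def)
  finally show ?thesis .
qed

lemma sum_norm_pow4_le:
  "(\<Sum>x\<in>ZNd N d. (norm (h x)) ^ 4) \<le> weighted_energy N d S (\<lambda>m. norm (dft N d h m)) / n"
proof -
  have "(\<Sum>x\<in>ZNd N d. (norm (h x)) ^ 4)
      = (\<Sum>x\<in>ZNd N d. c ^ 4 * (norm (\<Sum>m\<in>S. dft N d h m * character N d m x)) ^ 4)"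
    using fourier_scale_pos[OF N_pos]
    by (intro sum.cong refl) (simp only: eq_spectrum_sum norm_mult norm_of_real power_mult_distrib
        power_abs abs_of_pos)
  also have "\<dots> = c ^ 4 * (\<Sum>x\<in>ZNd N d. (norm (\<Sum>m\<in>S. dft N d h m * character N d m x)) ^ 4)"
    by (rule sum_distrib_left[symmetric])
  also have "\<dots> \<le> c ^ 4 * (n * weighted_energy N d S (\<lambda>m. norm (dft N d h m)))"
    by (intro mult_left_mono sum_norm_pow4_character_sum_le N_pos spectrum_subset) simp
  also have "\<dots> = weighted_energy N d S (\<lambda>m. norm (dft N d h m)) / n"
    using n_pos by (simp add: c_pow4 power2_eq_square)
  finally show ?thesis .
qed

lemma sum_norm_dft_pow4_le:
  "(\<Sum>m\<in>S. (norm (dft N d h m)) ^ 4) \<le> (real (card S) * mass / n)\<^sup>2 * real (energy N d T) / n"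
proof -
  let ?B = "sqrt (real (card S) * mass / n)"
  have "(\<Sum>m\<in>S. (norm (dft N d h m)) ^ 4) \<le> (\<Sum>m\<in>ZNd N d. (norm (dft N d h m)) ^ 4)"
    using spectrum_subset by (intro sum_mono2) (auto simp: finite_ZNd)
  also have "\<dots> = c ^ 4 * (\<Sum>m\<in>ZNd N d. (norm (\<Sum>y\<in>T. cnj (h y) * character N d y m)) ^ 4)"
    using fourier_scale_pos[OF N_pos]
    by (simp only: dft_eq_support_sum sum_distrib_left norm_mult complex_mod_cnj norm_of_real
        power_mult_distrib power_abs abs_of_pos)
  also have "\<dots> \<le> c ^ 4 * (n * weighted_energy N d T (\<lambda>y. norm (cnj (h y))))"
    by (intro mult_left_mono sum_norm_pow4_character_sum_le N_pos) (auto simp: supp_def)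
  also have "\<dots> \<le> c ^ 4 * (n * (?B ^ 4 * real (energy N d T)))"
    using norm_sq_le mass_pos n_pos
    by (intro mult_left_mono weighted_energy_le_energy finite_support)
      (auto simp: supp_def real_le_rsqrt)
  also have "\<dots> = (real (card S) * mass / n)\<^sup>2 * real (energy N d T) / n"
    using n_pos mass_pos by (simp add: c_pow4 sqrt_pow4 power2_eq_square)
  finally show ?thesis .
qed

theorem energy_support_ge: "n ^ 3 \<le> real (card S) ^ 3 * real (energy N d T)"
proof -
  have "mass\<^sup>2 \<le> real (card S) * ((real (card S) * mass / n)\<^sup>2 * real (energy N d T) / n)"
    using mass_sq_le_card_spectrum sum_norm_dft_pow4_le
    by (meson mult_left_mono of_nat_0_le_iff order_trans)
  also have "\<dots> = mass\<^sup>2 * (real (card S) ^ 3 * real (energy N d T) / n ^ 3)"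
    using n_pos by (simp add: field_simps power2_eq_square power3_eq_cube)
  finally have "mass\<^sup>2 * 1 \<le> mass\<^sup>2 * (real (card S) ^ 3 * real (energy N d T) / n ^ 3)"
    by simp
  then show ?thesis
    using mass_pos n_pos by (simp add: mult_le_cancel_left_pos field_simps)
qed

lemma weighted_energy_spectrum_le:
  defines "s \<equiv> real (card S)" and "\<tau> \<equiv> real (card T)"
  shows "weighted_energy N d S (\<lambda>m. norm (dft N d h m))
    \<le> mass\<^sup>2 * (2 - 1 / s + (real (energy N d S) - (2 * s\<^sup>2 - s)) * (\<tau> / n)\<^sup>2)"
proof -
  let ?U4 = "\<Sum>m\<in>S. (norm (dft N d h m)) ^ 4"
  let ?B = "sqrt (\<tau> * mass / n)"
  have s_pos: "s > 0"
    using card_spectrum_ge_1 by (simp add: s_def)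
  have U4: "mass\<^sup>2 / s \<le> ?U4"
    using mass_sq_le_card_spectrum s_pos by (simp add: s_def divide_le_eq mult.commute)
  have "weighted_energy N d S (\<lambda>m. norm (dft N d h m))
      \<le> 2 * mass\<^sup>2 - ?U4 + (real (energy N d S) - (2 * s\<^sup>2 - s)) * ?B ^ 4"
    using weighted_energy_le[OF finite_spectrum, of "\<lambda>m. norm (dft N d h m)" ?B N d]
      norm_dft_sq_le mass_pos n_pos
    by (simp add: mass_eq_spectrum[symmetric] s_def \<tau>_def real_le_rsqrt)
  also have "\<dots> = mass\<^sup>2 * (2 - 1 / s + (real (energy N d S) - (2 * s\<^sup>2 - s)) * (\<tau> / n)\<^sup>2)
      + (mass\<^sup>2 / s - ?U4)"
    using s_pos n_pos mass_pos
    by (simp add: sqrt_pow4 \<tau>_def field_simps power2_eq_square)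
  also have "\<dots> \<le> mass\<^sup>2 * (2 - 1 / s + (real (energy N d S) - (2 * s\<^sup>2 - s)) * (\<tau> / n)\<^sup>2)"
    using U4 by simp
  finally show ?thesis .
qed

theorem energy_spectrum_ge:
  defines "s \<equiv> real (card S)" and "\<tau> \<equiv> real (card T)"
  shows "n \<le> \<tau> * (2 - 1 / s + (real (energy N d S) - (2 * s\<^sup>2 - s)) * (\<tau> / n)\<^sup>2)"
proof -
  have "n * mass\<^sup>2 \<le> \<tau> * (n * (\<Sum>x\<in>ZNd N d. (norm (h x)) ^ 4))"
    using mass_sq_le_card_support n_pos by (simp add: \<tau>_def mult.left_commute)
  also have "\<dots> \<le> \<tau> * weighted_energy N d S (\<lambda>m. norm (dft N d h m))"
    using sum_norm_pow4_le n_pos by (intro mult_left_mono) (simp_all add: \<tau>_def field_simps)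
  also have "\<dots> \<le> \<tau> * (mass\<^sup>2 * (2 - 1 / s + (real (energy N d S) - (2 * s\<^sup>2 - s)) * (\<tau> / n)\<^sup>2))"
    using weighted_energy_spectrum_le by (intro mult_left_mono) (simp_all add: s_def \<tau>_def)
  finally show ?thesis
    using mass_pos by (simp add: mult.left_commute[of \<tau>] mult_le_cancel_left_pos mult.commute[of n])
qed

theorem uncertainty:
  assumes card_T: "real (card T) \<le> 2 * e" and "0 \<le> K" and "0 \<le> \<alpha>"
    and energy_T: "real (energy N d T) \<le> K * real (card T) powr \<alpha>"
  shows "n ^ 3 / 8 \<le> e ^ 3 * (real (energy N d S)
    - real (card S) * (real (card S) - 1)
        * (1 - sqrt (K / (2 * e) powr (3 - \<alpha>)) * sqrt (n / (2 * e * real (card S))))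
    - real (card S) ^ 2 * (1 - n / (2 * e * real (card S))))"
proof -
  have "real (energy N d T) \<le> K * (2 * e) powr \<alpha>"
    using energy_T card_T assms(2,3) by (meson mult_left_mono order_trans powr_mono2 of_nat_0_le_iff)
  then have "n ^ 3 \<le> real (card S) ^ 3 * (K * (2 * e) powr \<alpha>)"
    using energy_support_ge by (meson mult_left_mono order_trans zero_le_power of_nat_0_le_iff)
  then have "n ^ 3 \<le> (2 * e) ^ 3 * (real (energy N d S)
    - real (card S) * (real (card S) - 1)
        * (1 - sqrt (K / (2 * e) powr (3 - \<alpha>)) * sqrt (n / (2 * e * real (card S))))
    - real (card S) ^ 2 * (1 - n / (2 * e * real (card S))))"
    using assms n_pos card_spectrum_ge_1 card_support_spectrum_ge energy_spectrum_ge
      energy_ge_trivial[OF finite_spectrum]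
    by (intro combine_uncertainty_bounds) auto
  then show ?thesis
    by (simp add: power_mult_distrib)
qed

end

theorem mainTheorem2:
  fixes N d :: nat and f :: "(nat \<Rightarrow> int) \<Rightarrow> complex"
    and S :: "(nat \<Rightarrow> int) set" and K \<alpha> :: real
  assumes "N \<ge> 2" and "d \<ge> 1"
    and "S \<subseteq> ZNd N d"
    and "K \<ge> 0" and "2 \<le> \<alpha>" and "\<alpha> \<le> 3"
    and energy_bound: "\<forall>T. T \<subseteq> ZNd N d \<and> card T \<le> 2 * card (supp N d f) \<longrightarrow>
             real (energy N d T) \<le> K * real (card T) powr \<alpha>"
    and main: "real (card (supp N d f)) ^ 3 *
        (real (energy N d S)
         - real (card S) * (real (card S) - 1) *
             (1 - sqrt (K / (2 * real (card (supp N d f))) powr (3 - \<alpha>))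
                  * sqrt (real N ^ d / (2 * real (card (supp N d f)) * real (card S))))
         - real (card S) ^ 2 * (1 - real N ^ d / (2 * real (card (supp N d f)) * real (card S))))
        < real N ^ (3 * d) / 8"
  shows "\<forall>g. card (supp N d g) = card (supp N d f) \<and>
             (\<forall>m \<in> ZNd N d - S. dft N d g m = dft N d f m) \<longrightarrow>
             (\<forall>x \<in> ZNd N d. g x = f x)"
proof (intro allI impI)
  fix g
  assume g: "card (supp N d g) = card (supp N d f) \<and> (\<forall>m \<in> ZNd N d - S. dft N d g m = dft N d f m)"
  define h where "h x = g x - f x" for x
  have card_T: "real (card (supp N d h)) \<le> 2 * real (card (supp N d f))"
    using card_supp_diff_le[of N d g f] g by (simp add: h_def[abs_def])
  show "\<forall>x \<in> ZNd N d. g x = f x"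
  proof (rule ccontr)
    assume "\<not> (\<forall>x \<in> ZNd N d. g x = f x)"
    then have "sparse_spectrum N d h S"
      using assms(1,3) g by unfold_locales (auto simp: supp_def h_def[abs_def] dft_diff)
    then interpret sparse_spectrum N d h S .
    have "real (energy N d (supp N d h)) \<le> K * real (card (supp N d h)) powr \<alpha>"
      using energy_bound card_T by (simp add: supp_def)
    from uncertainty[OF card_T assms(4) _ this] assms(5) main show False
      by (simp add: mult.commute flip: power_mult)
  qed
qed

end
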